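(* Let $n,m\ge1$, $q_1,\dots,q_m\in\Delta_n$, $d\in\mathbb{R}^{n^2}_+$, and let $\mathcal Z=\mathcal X\times\mathcal Y$, $G$, $\hat A$, $\mathcal E$ be as in the context. Define the regularizer on $\mathcal Z$ \[r(\mathbf x,\mathbf y)=\frac{2\|d\|_\infty}{m}\Big(10\sum_{i=1}^m\langle x_i,\log x_i\rangle+5m\langle p,\log p\rangle+\hat x^\top\hat A^\top(\mathbf y)^2-p^\top\mathcal E^\top(\mathbf y)^2\Big),\] where $\hat x=(x_1^\top,\dots,x_m^\top)^\top$ and $\log$, $(\cdot)^2$ act entrywise. Then $r$ is $3$-area-convex with respect to $G$, i.e. for all $\boldsymbol a,\boldsymbol b,\boldsymbol c\in\mathcal Z$, \[3\Big(r(\boldsymbol a)+r(\boldsymbol b)+r(\boldsymbol c)-3r\big(\tfrac{\boldsymbol a+\boldsymbol b+\boldsymbol c}{3}\big)\Big)\ge\langle G(\boldsymbol a)-G(\boldsymbol b),\boldsymbol b-\boldsymbol c\rangle.\]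
   Context: $\Delta_k=\{p\in\mathbb{R}^k_+:\sum_j p_j=1\}$. $\mathcal X=(\Delta_{n^2})^m\times\Delta_n$ with elements $\mathbf x=(x_1,\dots,x_m,p)$, $\mathcal Y=[-1,1]^{2mn}$ with elements $\mathbf y=(y_1,\dots,y_m)$, $y_i\in[-1,1]^{2n}$. $A\in\{0,1\}^{2n\times n^2}$ is the incidence matrix with $Ax=(X\mathbf 1;X^\top\mathbf 1)$ for $x$ the vectorization of $X\in\mathbb{R}^{n\times n}$. $\hat A$ is block diagonal with $m$ diagonal blocks $A$; $\mathcal E\in\mathbb{R}^{2mn\times n}$ consists of $m$ vertically stacked blocks each equal to $-\begin{pmatrix}I_n\\0_{n\times n}\end{pmatrix}$; $\boldsymbol A=(\hat A\ \ \mathcal E)$. $\boldsymbol d=(d,\dots,d,0_n)$, $\boldsymbol c=(0_n,q_1,\dots,0_n,q_m)$. $G(\mathbf x,\mathbf y)=\frac1m\big(\boldsymbol d+2\|d\|_\infty\boldsymbol A^\top\mathbf y,\ 2\|d\|_\infty(\boldsymbol c-\boldsymbol A\mathbf x)\big)$, the gradient operator $(\nabla_{\mathbf x}F,-\nabla_{\mathbf y}F)$ of $F(\mathbf x,\mathbf y)=\frac1m\{\boldsymbol d^\top\mathbf x+2\|d\|_\infty(\mathbf y^\top\boldsymbol A\mathbf x-\boldsymbol c^\top\mathbf y)\}$. Convention $0\log0=0$. *)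

theory Defs
  imports Complex_Main
begin

(* Index sets: blocks i < m, coordinates of x_i (vectorized n x n matrix X_i) e < n^2
   with e = j*n + k  <->  entry (j,k) (row-major vectorization), coordinates of p: j < n,
   coordinates of y_i: r < 2n (first n rows: row sums, last n: column sums).
   A point z of Z = X x Y is a triple (x, p, y) with
     x :: nat => nat => real   (x i e),
     p :: nat => real          (p j),
     y :: nat => nat => real   (y i r).
   Values outside the index ranges are irrelevant (never used). *)

type_synonym pt = "(nat \<Rightarrow> nat \<Rightarrow> real) \<times> (nat \<Rightarrow> real) \<times> (nat \<Rightarrow> nat \<Rightarrow> real)"

definition simplex :: "nat \<Rightarrow> (nat \<Rightarrow> real) \<Rightarrow> bool" where
  "simplex k v \<longleftrightarrow> (\<forall>i<k. 0 \<le> v i) \<and> (\<Sum>i<k. v i) = 1"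

definition xlogx :: "real \<Rightarrow> real" where
  "xlogx t = (if t = 0 then 0 else t * ln t)"

(* incidence matrix A in {0,1}^{2n x n^2}: (A x) = (X 1; X^T 1) *)
definition incA :: "nat \<Rightarrow> nat \<Rightarrow> nat \<Rightarrow> real" where
  "incA n r e = (if (r < n \<and> e div n = r) \<or> (n \<le> r \<and> r < 2*n \<and> e mod n = r - n) then 1 else 0)"

definition Eblk :: "nat \<Rightarrow> nat \<Rightarrow> nat \<Rightarrow> real" where
  "Eblk n r j = (if r < n \<and> r = j then -1 else 0)"

definition inZ :: "nat \<Rightarrow> nat \<Rightarrow> pt \<Rightarrow> bool" where
  "inZ n m z = (case z of (x, p, y) \<Rightarrow>
     (\<forall>i<m. simplex (n^2) (x i)) \<and> simplex n p \<and>
     (\<forall>i<m. \<forall>r<2*n. -1 \<le> y i r \<and> y i r \<le> 1))"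

definition dinf :: "nat \<Rightarrow> (nat \<Rightarrow> real) \<Rightarrow> real" where
  "dinf n d = Max ((\<lambda>e. \<bar>d e\<bar>) ` {..<n^2})"

definition Ax :: "nat \<Rightarrow> nat \<Rightarrow> pt \<Rightarrow> nat \<Rightarrow> nat \<Rightarrow> real" where
  "Ax n m z i r = (case z of (x, p, y) \<Rightarrow>
     (\<Sum>e<n^2. incA n r e * x i e) + (\<Sum>j<n. Eblk n r j * p j))"

definition ATy_x :: "nat \<Rightarrow> (nat \<Rightarrow> nat \<Rightarrow> real) \<Rightarrow> nat \<Rightarrow> nat \<Rightarrow> real" where
  "ATy_x n y i e = (\<Sum>r<2*n. incA n r e * y i r)"

definition ATy_p :: "nat \<Rightarrow> nat \<Rightarrow> (nat \<Rightarrow> nat \<Rightarrow> real) \<Rightarrow> nat \<Rightarrow> real" where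
  "ATy_p n m y j = (\<Sum>i<m. \<Sum>r<2*n. Eblk n r j * y i r)"

definition cvec :: "nat \<Rightarrow> (nat \<Rightarrow> nat \<Rightarrow> real) \<Rightarrow> nat \<Rightarrow> nat \<Rightarrow> real" where
  "cvec n q i r = (if r < n then 0 else q i (r - n))"

definition Gop :: "nat \<Rightarrow> nat \<Rightarrow> (nat \<Rightarrow> real) \<Rightarrow> (nat \<Rightarrow> nat \<Rightarrow> real) \<Rightarrow> pt \<Rightarrow> pt" where
  "Gop n m d q z = (case z of (x, p, y) \<Rightarrow>
     ((\<lambda>i e. (d e + 2 * dinf n d * ATy_x n y i e) / real m),
      (\<lambda>j. (0 + 2 * dinf n d * ATy_p n m y j) / real m),
      (\<lambda>i r. (2 * dinf n d * (cvec n q i r - Ax n m z i r)) / real m)))"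

definition ip :: "nat \<Rightarrow> nat \<Rightarrow> pt \<Rightarrow> pt \<Rightarrow> real" where
  "ip n m u v = (case u of (ux, up, uy) \<Rightarrow> case v of (vx, vp, vy) \<Rightarrow>
     (\<Sum>i<m. \<Sum>e<n^2. ux i e * vx i e) + (\<Sum>j<n. up j * vp j) +
     (\<Sum>i<m. \<Sum>r<2*n. uy i r * vy i r))"

definition pt_diff :: "pt \<Rightarrow> pt \<Rightarrow> pt" where
  "pt_diff u v = (case u of (ux, up, uy) \<Rightarrow> case v of (vx, vp, vy) \<Rightarrow>
     ((\<lambda>i e. ux i e - vx i e), (\<lambda>j. up j - vp j), (\<lambda>i r. uy i r - vy i r)))"

definition pt_avg3 :: "pt \<Rightarrow> pt \<Rightarrow> pt \<Rightarrow> pt" where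
  "pt_avg3 a b c = (case a of (ax, ap, ay) \<Rightarrow> case b of (bx, bp, by) \<Rightarrow> case c of (cx, cp, cy) \<Rightarrow>
     ((\<lambda>i e. (ax i e + bx i e + cx i e) / 3), (\<lambda>j. (ap j + bp j + cp j) / 3),
      (\<lambda>i r. (ay i r + by i r + cy i r) / 3)))"

definition reg :: "nat \<Rightarrow> nat \<Rightarrow> (nat \<Rightarrow> real) \<Rightarrow> pt \<Rightarrow> real" where
  "reg n m d z = (case z of (x, p, y) \<Rightarrow>
     2 * dinf n d / real m *
       (10 * (\<Sum>i<m. \<Sum>e<n^2. xlogx (x i e))
        + 5 * real m * (\<Sum>j<n. xlogx (p j))
        + (\<Sum>i<m. \<Sum>e<n^2. x i e * (\<Sum>r<2*n. incA n r e * (y i r)^2))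
        - (\<Sum>j<n. p j * (\<Sum>i<m. \<Sum>r<2*n. Eblk n r j * (y i r)^2))))"

end

theory Submission
  imports Defs
begin

(* Both sides split along the nonzero entries of boldA = (hatA E).  With
   phi(w, y) = 5 w log w + w y^2, the regularizer r is 2 |d|_inf / m times the sum of
   |A_(s,k)| phi(z_k, y_s) over the entries (s, k), and <G(a) - G(b), b - c> is 2 |d|_inf / m
   times the sum of A_(s,k) [(y^a_s - y^b_s)(z^b_k - z^c_k) - (y^b_s - y^c_s)(z^a_k - z^b_k)],
   the constant parts d and c of G cancelling.  The bracket is twice the signed area of the
   triangle spanned by the three points (z_k, y_s), so it suffices that phi is 3-area-convex on
   [0, inf) x [-1, 1].  The Jensen defect of phi at three points is the sum of the Bregman
   divergences of phi at their centroid (w0, y0).  The entropy estimates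
   (w - w0)^2 <= 2 w0 D(w0, w) for w <= w0 and (w - w0)^2 <= (w + w0) D(w0, w) for w >= w0
   bound each divergence below by ((w - w0)^2 + w0^2 (y - y0)^2) / (3 w0), and a sum of squares
   bounds w0 times the doubled area by the sum of these squares. *)

lemma ln_ge_two_mul_diff_div_add:
  fixes t :: real
  assumes "1 \<le> t"
  shows "2 * (t - 1) / (t + 1) \<le> ln t"
proof -
  let ?f = "\<lambda>x::real. ln x - 2 * (x - 1) / (x + 1)"
  have "?f 1 \<le> ?f t"
  proof (rule DERIV_nonneg_imp_increasing_open[OF assms])
    fix x :: real assume x: "1 < x" "x < t"
    have "DERIV ?f x :> 1 / x - (2 * (x + 1) - 2 * (x - 1)) / (x + 1)^2"
      using x by (auto intro!: derivative_eq_intros simp: power2_eq_square)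
    moreover have "1 / x - (2 * (x + 1) - 2 * (x - 1)) / (x + 1)^2 = (x - 1)^2 / (x * (x + 1)^2)"
      using x by (simp add: divide_simps power2_eq_square) (simp add: algebra_simps)
    ultimately show "\<exists>y. DERIV ?f x :> y \<and> 0 \<le> y"
      using x by auto
  qed (intro continuous_intros, auto)
  then show ?thesis by simp
qed

lemma ln_le_half_diff_inverse:
  fixes s :: real
  assumes "1 \<le> s"
  shows "ln s \<le> (s - 1 / s) / 2"
proof -
  have "0 < s" using assms by simp
  have "ln s \<le> (exp (ln s) - inverse (exp (ln s))) / 2"
    using assms by (intro real_le_x_sinh) simp
  then show ?thesis using \<open>0 < s\<close> by (simp add: inverse_eq_divide)
qed

definition xlogx_bregman :: "real \<Rightarrow> real \<Rightarrow> real" where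
  "xlogx_bregman w0 w = xlogx w - xlogx w0 - (1 + ln w0) * (w - w0)"

lemma xlogx_bregman_pos_eq:
  assumes "0 < w0" "0 < w"
  shows "xlogx_bregman w0 w = w * (ln w - ln w0) - (w - w0)"
  using assms by (simp add: xlogx_bregman_def xlogx_def algebra_simps)

lemma sq_le_xlogx_bregman_below:
  fixes w0 w :: real
  assumes w0: "0 < w0" and w: "0 \<le> w" "w \<le> w0"
  shows "(w - w0)^2 \<le> 2 * w0 * xlogx_bregman w0 w"
proof (cases "w = 0")
  case True
  then show ?thesis using w0 by (simp add: xlogx_bregman_def xlogx_def power2_eq_square algebra_simps)
next
  case False
  with w have "0 < w" by simp
  have "ln (w0 / w) \<le> (w0 / w - 1 / (w0 / w)) / 2"
    using \<open>0 < w\<close> w by (intro ln_le_half_diff_inverse) simp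
  then have "ln w0 - ln w \<le> (w0 / w - w / w0) / 2"
    using \<open>0 < w\<close> w0 by (simp add: ln_div)
  then have "w * (-(w0 / w - w / w0) / 2) \<le> w * (ln w - ln w0)"
    using \<open>0 < w\<close> by (intro mult_left_mono) auto
  moreover have "w * (-(w0 / w - w / w0) / 2) - (w - w0) = (w - w0)^2 / (2 * w0)"
    using \<open>0 < w\<close> w0 by (simp add: field_simps power2_eq_square)
  ultimately have "(w - w0)^2 / (2 * w0) \<le> xlogx_bregman w0 w"
    using xlogx_bregman_pos_eq[OF w0 \<open>0 < w\<close>] by linarith
  then show ?thesis using w0 by (simp add: field_simps)
qed

lemma sq_le_xlogx_bregman_above:
  fixes w0 w :: real
  assumes w0: "0 < w0" and w: "w0 \<le> w"
  shows "(w - w0)^2 \<le> (w + w0) * xlogx_bregman w0 w"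
proof -
  have "0 < w" using w0 w by simp
  have "w / w0 - 1 = (w - w0) / w0" "w / w0 + 1 = (w + w0) / w0"
    using w0 by (simp_all add: field_simps)
  then have "2 * (w - w0) / (w + w0) = 2 * (w / w0 - 1) / (w / w0 + 1)"
    using w0 \<open>0 < w\<close> by (simp add: divide_simps)
  also have "\<dots> \<le> ln (w / w0)"
    using w0 w by (intro ln_ge_two_mul_diff_div_add) simp
  finally have "w * (2 * (w - w0) / (w + w0)) \<le> w * (ln w - ln w0)"
    using \<open>0 < w\<close> w0 by (intro mult_left_mono) (simp_all add: ln_div)
  moreover have "w * (2 * (w - w0) / (w + w0)) - (w - w0) = (w - w0)^2 / (w + w0)"
    using \<open>0 < w\<close> w0 by (simp add: field_simps power2_eq_square)
  ultimately have "(w - w0)^2 / (w + w0) \<le> xlogx_bregman w0 w"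
    using xlogx_bregman_pos_eq[OF w0 \<open>0 < w\<close>] by linarith
  then show ?thesis using w0 \<open>0 < w\<close> by (simp add: field_simps)
qed

lemma quadratic_form_nonneg:
  fixes P Q R X Y :: real
  assumes "0 < P" "R^2 \<le> P * Q"
  shows "0 \<le> P * X^2 - 2 * R * X * Y + Q * Y^2"
proof -
  have "P * (P * X^2 - 2 * R * X * Y + Q * Y^2) = (P * X - R * Y)^2 + (P * Q - R^2) * Y^2"
    by (simp add: power2_eq_square algebra_simps)
  also have "\<dots> \<ge> 0" using assms by simp
  finally show ?thesis using assms(1) by (simp add: zero_le_mult_iff)
qed

lemma discriminant_bound_above_mean:
  fixes w0 w :: real
  assumes w0: "0 < w0" and w: "w0 \<le> w" "w \<le> 3 * w0"
  shows "(3 * w0 * (w + w0))^2 \<le> (14 * w0 - w) * (w0 * (w + w0) * (3 * w - w0))"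
proof -
  define v where "v = w - w0"
  have "v * v \<le> 2 * w0 * v" using w by (intro mult_right_mono) (simp_all add: v_def)
  moreover have "(14 * w0 - w) * (3 * w - w0) - 9 * w0 * (w + w0)
      = 8 * (w0 * w0) + 28 * (w0 * v) - 3 * (v * v)"
    by (simp add: v_def algebra_simps)
  moreover have "0 \<le> w0 * v" "0 \<le> w0 * w0" using w0 w by (simp_all add: v_def)
  ultimately have "9 * w0 * (w + w0) \<le> (14 * w0 - w) * (3 * w - w0)" by linarith
  then have "(w0 * (w + w0)) * (9 * w0 * (w + w0)) \<le> (w0 * (w + w0)) * ((14 * w0 - w) * (3 * w - w0))"
    using w0 w by (intro mult_left_mono) simp_all
  then show ?thesis by (simp add: power2_eq_square algebra_simps)
qed

lemma centered_bound_above_mean: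
  fixes w0 w y0 u e :: real
  assumes w0: "0 < w0" and w: "w0 \<le> w" "w \<le> 3 * w0" and y0: "\<bar>y0\<bar> \<le> 1"
    and e: "(w - w0)^2 \<le> (w + w0) * e"
  shows "(w - w0)^2 + w0^2 * u^2 \<le> 3 * w0 * (5 * e + w * u^2 + 2 * y0 * (w - w0) * u)"
proof -
  define v where "v = w - w0"
  have "0 \<le> v" using w by (simp add: v_def)
  have disc: "0 \<le> (14 * w0 - w) * v^2 - 2 * (3 * w0 * (w + w0)) * v * \<bar>u\<bar>
      + (w0 * (w + w0) * (3 * w - w0)) * \<bar>u\<bar>^2"
    using w0 w discriminant_bound_above_mean by (intro quadratic_form_nonneg) simp_all
  have "\<bar>y0 * u\<bar> \<le> \<bar>u\<bar>"
    using y0 by (simp add: abs_mult mult_left_le_one_le)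
  then have "- (v * \<bar>u\<bar>) \<le> v * (y0 * u)"
    using \<open>0 \<le> v\<close> mult_left_mono[of "- \<bar>u\<bar>" "y0 * u" v] by simp
  then have cross: "- (6 * w0 * (w + w0) * (v * \<bar>u\<bar>)) \<le> 6 * w0 * (w + w0) * (v * (y0 * u))"
    using w0 w mult_left_mono[of "- (v * \<bar>u\<bar>)" "v * (y0 * u)" "6 * w0 * (w + w0)"] by simp
  have ent: "15 * w0 * v^2 \<le> 15 * w0 * ((w + w0) * e)"
    using e w0 by (simp add: v_def)
  have "(w + w0) * (3 * w0 * (5 * e + w * u^2 + 2 * y0 * (w - w0) * u) - (w - w0)^2 - w0^2 * u^2)
      = 15 * w0 * ((w + w0) * e) + 6 * w0 * (w + w0) * (v * (y0 * u))
        + (w + w0) * (3 * w0 * w - w0^2) * u^2 - (w + w0) * v^2"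
    by (simp add: v_def algebra_simps power2_eq_square)
  moreover have "(14 * w0 - w) * v^2 - 2 * (3 * w0 * (w + w0)) * v * \<bar>u\<bar>
        + (w0 * (w + w0) * (3 * w - w0)) * \<bar>u\<bar>^2
      = 15 * w0 * v^2 - 6 * w0 * (w + w0) * (v * \<bar>u\<bar>)
        + (w + w0) * (3 * w0 * w - w0^2) * u^2 - (w + w0) * v^2"
    by (simp add: algebra_simps power2_eq_square)
  ultimately have
    "0 \<le> (w + w0) * (3 * w0 * (5 * e + w * u^2 + 2 * y0 * (w - w0) * u) - (w - w0)^2 - w0^2 * u^2)"
    using disc cross ent by linarith
  then show ?thesis using w0 w by (simp add: zero_le_mult_iff)
qed

lemma centered_bound_below_mean:
  fixes w0 w y0 u e :: real
  assumes w0: "0 < w0" and w: "0 \<le> w" "w \<le> w0" and y0: "\<bar>y0\<bar> \<le> 1" and y: "\<bar>y0 + u\<bar> \<le> 1"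
    and e: "(w - w0)^2 \<le> 2 * w0 * e"
  shows "(w - w0)^2 + w0^2 * u^2 \<le> 3 * w0 * (5 * e + w * u^2 + 2 * y0 * (w - w0) * u)"
proof -
  define a where "a = w0 - w"
  have a: "0 \<le> a" "a \<le> w0" using w by (simp_all add: a_def)
  have "0 \<le> 13 * a^2 + (4 * w0^2 - 6 * w0 * a) * u^2 - 12 * w0 * a * (y0 * u)"
  proof (cases "y0 * u \<le> 0")
    case True
    have "0 \<le> 13 * a^2 + (4 * w0^2 - 6 * w0 * a) * u^2"
    proof (cases "0 \<le> 4 * w0^2 - 6 * w0 * a")
      case False
      have "\<bar>u\<bar> \<le> 2" using y y0 by linarith
      then have "u^2 \<le> 2^2" by (metis abs_le_square_iff abs_numeral)
      then have "4 * (4 * w0^2 - 6 * w0 * a) \<le> (4 * w0^2 - 6 * w0 * a) * u^2"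
        using False mult_left_mono_neg[of "u^2" 4 "4 * w0^2 - 6 * w0 * a"] by (simp add: mult.commute)
      moreover have "13 * a^2 + 4 * (4 * w0^2 - 6 * w0 * a) = (3 * a - 4 * w0)^2 + 4 * a^2"
        by (simp add: algebra_simps power2_eq_square)
      ultimately show ?thesis using zero_le_power2[of "3 * a - 4 * w0"] zero_le_power2[of a] by linarith
    qed simp
    moreover have "0 \<le> - (12 * w0 * a * (y0 * u))"
      using True w0 a by (simp add: mult_nonneg_nonpos)
    ultimately show ?thesis by linarith
  next
    case False
    have "\<bar>y0\<bar> + \<bar>u\<bar> = \<bar>y0 + u\<bar>"
      using False by (auto simp: abs_if zero_less_mult_iff not_le)
    then have "y0 * u \<le> (1 - \<bar>u\<bar>) * \<bar>u\<bar>"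
      using y mult_right_mono[of "\<bar>y0\<bar>" "1 - \<bar>u\<bar>" "\<bar>u\<bar>"] by (simp add: abs_mult[symmetric])
    then have "12 * w0 * a * (y0 * u) \<le> 12 * w0 * a * (\<bar>u\<bar> - u^2)"
      using w0 a by (intro mult_left_mono) (simp_all add: algebra_simps power2_eq_square)
    moreover have "0 \<le> 13 * a^2 - 2 * (6 * w0) * a * \<bar>u\<bar> + (4 * w0^2 + 6 * w0 * a) * \<bar>u\<bar>^2"
      using w0 a by (intro quadratic_form_nonneg) (simp_all add: power2_eq_square algebra_simps)
    ultimately show ?thesis by (simp add: algebra_simps power2_eq_square)
  qed
  moreover have "15 * a^2 \<le> 15 * (2 * w0 * e)"
    using e by (simp add: a_def power2_commute mult_ac)
  moreover have "2 * (3 * w0 * (5 * e + w * u^2 + 2 * y0 * (w - w0) * u) - (w - w0)^2 - w0^2 * u^2)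
      = 15 * (2 * w0 * e) + (4 * w0^2 - 6 * w0 * a) * u^2 - 12 * w0 * a * (y0 * u) - 2 * a^2"
    by (simp add: a_def algebra_simps power2_eq_square)
  ultimately have "0 \<le> 2 * (3 * w0 * (5 * e + w * u^2 + 2 * y0 * (w - w0) * u) - (w - w0)^2 - w0^2 * u^2)"
    by linarith
  then show ?thesis by simp
qed

lemma cross_le_sum_squares_centered:
  fixes v1 v2 v3 u1 u2 u3 :: real
  assumes "v1 + v2 + v3 = 0" "u1 + u2 + u3 = 0"
  shows "3 * \<bar>v1 * u2 - v2 * u1\<bar> \<le> v1^2 + v2^2 + v3^2 + u1^2 + u2^2 + u3^2"
proof -
  have sos: "0 \<le> 2 * (v1^2 + v1 * v2 + v2^2) + 2 * (U1^2 + U1 * U2 + U2^2) + 3 * (v1 * U2 - v2 * U1)"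
    for U1 U2 :: real
  proof -
    have "2 * (v1^2 + v1 * v2 + v2^2) + 2 * (U1^2 + U1 * U2 + U2^2) + 3 * (v1 * U2 - v2 * U1)
        = 2 * (v1 + v2 / 2 + 3 * U2 / 4)^2 + 3 / 2 * (v2 - U1 - U2 / 2)^2 + 1 / 2 * (U1 + U2 / 2)^2
          + 3 / 8 * U2^2"
      by (simp add: power2_eq_square algebra_simps)
    also have "\<dots> \<ge> 0" by simp
    finally show ?thesis .
  qed
  have v3: "v3 = - (v1 + v2)" and u3: "u3 = - (u1 + u2)" using assms by simp_all
  have "v1^2 + v2^2 + v3^2 + u1^2 + u2^2 + u3^2
      = 2 * (v1^2 + v1 * v2 + v2^2) + 2 * (u1^2 + u1 * u2 + u2^2)"
    unfolding v3 u3 by (simp add: power2_eq_square algebra_simps)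
  moreover have "\<bar>3 * (v1 * u2 - v2 * u1)\<bar> \<le> 2 * (v1^2 + v1 * v2 + v2^2) + 2 * (u1^2 + u1 * u2 + u2^2)"
    using sos[of u1 u2] sos[of "- u1" "- u2"] by (simp add: abs_le_iff algebra_simps)
  ultimately show ?thesis by (simp only: abs_mult abs_numeral)
qed

definition edge_reg :: "real \<Rightarrow> real \<Rightarrow> real" where
  "edge_reg w y = 5 * xlogx w + w * y^2"

(* (5 (1 + ln w0) + y0^2, 2 w0 y0) is the gradient of edge_reg at (w0, y0). *)
definition edge_reg_bregman :: "real \<Rightarrow> real \<Rightarrow> real \<Rightarrow> real \<Rightarrow> real" where
  "edge_reg_bregman w0 y0 w y =
     edge_reg w y - edge_reg w0 y0 - (5 * (1 + ln w0) + y0^2) * (w - w0) - 2 * w0 * y0 * (y - y0)"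

lemma edge_reg_bregman_eq:
  "edge_reg_bregman w0 y0 w y = 5 * xlogx_bregman w0 w + w * (y - y0)^2 + 2 * y0 * (w - w0) * (y - y0)"
  by (simp add: edge_reg_bregman_def edge_reg_def xlogx_bregman_def power2_eq_square algebra_simps)

lemma edge_reg_bregman_lower_bound:
  fixes w0 w y0 y :: real
  assumes "0 < w0" "0 \<le> w" "w \<le> 3 * w0" "\<bar>y0\<bar> \<le> 1" "\<bar>y\<bar> \<le> 1"
  shows "(w - w0)^2 + w0^2 * (y - y0)^2 \<le> 3 * w0 * edge_reg_bregman w0 y0 w y"
proof (cases "w \<le> w0")
  case True
  then show ?thesis
    using assms sq_le_xlogx_bregman_below[of w0 w]
    by (simp add: edge_reg_bregman_eq centered_bound_below_mean)
next
  case False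
  then show ?thesis
    using assms sq_le_xlogx_bregman_above[of w0 w]
    by (simp add: edge_reg_bregman_eq centered_bound_above_mean)
qed

lemma edge_reg_defect3_eq_bregman:
  assumes "wa + wb + wc = 3 * w0" "ya + yb + yc = 3 * y0"
  shows "edge_reg wa ya + edge_reg wb yb + edge_reg wc yc - 3 * edge_reg w0 y0
    = edge_reg_bregman w0 y0 wa ya + edge_reg_bregman w0 y0 wb yb + edge_reg_bregman w0 y0 wc yc"
proof -
  have "edge_reg_bregman w0 y0 wa ya + edge_reg_bregman w0 y0 wb yb + edge_reg_bregman w0 y0 wc yc
      = edge_reg wa ya + edge_reg wb yb + edge_reg wc yc - 3 * edge_reg w0 y0
        - (5 * (1 + ln w0) + y0^2) * (wa + wb + wc - 3 * w0) - 2 * w0 * y0 * (ya + yb + yc - 3 * y0)"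
    unfolding edge_reg_bregman_def by (simp add: algebra_simps)
  with assms show ?thesis by simp
qed

lemma edge_reg_area_convex:
  fixes wa wb wc ya yb yc :: real
  assumes w: "0 \<le> wa" "0 \<le> wb" "0 \<le> wc" and y: "\<bar>ya\<bar> \<le> 1" "\<bar>yb\<bar> \<le> 1" "\<bar>yc\<bar> \<le> 1"
  shows "\<bar>(ya - yb) * (wb - wc) - (yb - yc) * (wa - wb)\<bar>
    \<le> 3 * (edge_reg wa ya + edge_reg wb yb + edge_reg wc yc
            - 3 * edge_reg ((wa + wb + wc) / 3) ((ya + yb + yc) / 3))"
proof -
  define w0 where "w0 = (wa + wb + wc) / 3"
  define y0 where "y0 = (ya + yb + yc) / 3"
  consider "w0 = 0" | "0 < w0" using w by (fastforce simp: w0_def)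
  then show ?thesis
  proof cases
    case 1
    then have "wa = 0" "wb = 0" "wc = 0" using w by (simp_all add: w0_def)
    then show ?thesis by (simp add: edge_reg_def xlogx_def)
  next
    case 2
    have "\<bar>y0\<bar> \<le> 1" using y by (simp add: y0_def)
    have bound: "(w - w0)^2 + w0^2 * (yy - y0)^2 \<le> 3 * w0 * edge_reg_bregman w0 y0 w yy"
      if "0 \<le> w" "w \<le> 3 * w0" "\<bar>yy\<bar> \<le> 1" for w yy
      using edge_reg_bregman_lower_bound \<open>0 < w0\<close> \<open>\<bar>y0\<bar> \<le> 1\<close> that by blast
    have sums: "wa + wb + wc = 3 * w0" "ya + yb + yc = 3 * y0" by (simp_all add: w0_def y0_def)
    have "wa \<le> 3 * w0" "wb \<le> 3 * w0" "wc \<le> 3 * w0" using w by (simp_all add: w0_def)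
    have "w0 * ((ya - yb) * (wb - wc) - (yb - yc) * (wa - wb))
        = - (3 * ((wa - w0) * (w0 * (yb - y0)) - (wb - w0) * (w0 * (ya - y0))))"
      by (simp add: w0_def y0_def field_simps)
    then have "w0 * \<bar>(ya - yb) * (wb - wc) - (yb - yc) * (wa - wb)\<bar>
        = 3 * \<bar>(wa - w0) * (w0 * (yb - y0)) - (wb - w0) * (w0 * (ya - y0))\<bar>"
      using \<open>0 < w0\<close> by (metis abs_minus_cancel abs_mult abs_numeral abs_of_pos)
    also have "\<dots> \<le> (wa - w0)^2 + (wb - w0)^2 + (wc - w0)^2
          + (w0 * (ya - y0))^2 + (w0 * (yb - y0))^2 + (w0 * (yc - y0))^2"
      by (intro cross_le_sum_squares_centered) (simp_all add: w0_def y0_def field_simps)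
    also have "\<dots> \<le> 3 * w0 * (edge_reg_bregman w0 y0 wa ya + edge_reg_bregman w0 y0 wb yb
                               + edge_reg_bregman w0 y0 wc yc)"
      using bound[OF w(1) \<open>wa \<le> 3 * w0\<close> y(1)] bound[OF w(2) \<open>wb \<le> 3 * w0\<close> y(2)]
        bound[OF w(3) \<open>wc \<le> 3 * w0\<close> y(3)]
      by (simp add: power_mult_distrib distrib_left)
    also have "\<dots> = w0 * (3 * (edge_reg wa ya + edge_reg wb yb + edge_reg wc yc - 3 * edge_reg w0 y0))"
      unfolding edge_reg_defect3_eq_bregman[OF sums] by (simp only: mult_ac)
    finally show ?thesis using \<open>0 < w0\<close> by (simp only: mult_le_cancel_left_pos w0_def y0_def)
  qed
qed

definition incidence_sum ::
  "nat \<Rightarrow> nat \<Rightarrow> (nat \<Rightarrow> nat \<Rightarrow> nat \<Rightarrow> real) \<Rightarrow> (nat \<Rightarrow> nat \<Rightarrow> nat \<Rightarrow> real)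
    \<Rightarrow> real" where
  "incidence_sum n m X P =
     (\<Sum>i<m. \<Sum>e<n^2. \<Sum>r<2*n. incA n r e * X i e r)
     + (\<Sum>i<m. \<Sum>j<n. \<Sum>r<2*n. Eblk n r j * P i j r)"

lemma incidence_sum_mono:
  assumes "\<And>i e r. i < m \<Longrightarrow> e < n^2 \<Longrightarrow> r < 2 * n \<Longrightarrow> X i e r \<le> X' i e r"
    and "\<And>i j r. i < m \<Longrightarrow> j < n \<Longrightarrow> r < 2 * n \<Longrightarrow> P' i j r \<le> P i j r"
  shows "incidence_sum n m X P \<le> incidence_sum n m X' P'"
proof -
  have "incA n r e * X i e r \<le> incA n r e * X' i e r" if "i < m" "e < n^2" "r < 2 * n" for i e r
    using assms(1)[OF that] by (intro mult_left_mono) (simp_all add: incA_def)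
  moreover have "Eblk n r j * P i j r \<le> Eblk n r j * P' i j r" if "i < m" "j < n" "r < 2 * n" for i j r
    using assms(2)[OF that] by (intro mult_left_mono_neg) (simp_all add: Eblk_def)
  ultimately show ?thesis
    unfolding incidence_sum_def by (intro add_mono sum_mono) auto
qed

lemma incidence_sum_diff:
  "incidence_sum n m (\<lambda>i e r. X i e r - X' i e r) (\<lambda>i j r. P i j r - P' i j r)
     = incidence_sum n m X P - incidence_sum n m X' P'"
  by (simp add: incidence_sum_def right_diff_distrib sum_subtractf)

lemma incidence_sum_ATy:
  "incidence_sum n m (\<lambda>i e r. y i r * x i e) (\<lambda>i j r. y i r * p j)
     = (\<Sum>i<m. \<Sum>e<n^2. ATy_x n y i e * x i e) + (\<Sum>j<n. ATy_p n m y j * p j)"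
proof -
  have "(\<Sum>i<m. \<Sum>j<n. \<Sum>r<2*n. Eblk n r j * (y i r * p j))
      = (\<Sum>j<n. \<Sum>i<m. \<Sum>r<2*n. Eblk n r j * (y i r * p j))"
    by (rule sum.swap)
  then show ?thesis
    by (simp add: incidence_sum_def ATy_x_def ATy_p_def sum_distrib_left sum_distrib_right mult_ac)
qed

lemma incidence_sum_Ax:
  "incidence_sum n m (\<lambda>i e r. y i r * x i e) (\<lambda>i j r. y i r * p j)
     = (\<Sum>i<m. \<Sum>r<2*n. Ax n m (x, p, y') i r * y i r)"
proof -
  have "(\<Sum>e<n^2. \<Sum>r<2*n. incA n r e * (y i r * x i e))
      = (\<Sum>r<2*n. \<Sum>e<n^2. incA n r e * (y i r * x i e))"
    "(\<Sum>j<n. \<Sum>r<2*n. Eblk n r j * (y i r * p j))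
      = (\<Sum>r<2*n. \<Sum>j<n. Eblk n r j * (y i r * p j))" for i
    by (rule sum.swap)+
  then show ?thesis
    by (simp add: incidence_sum_def Ax_def sum_distrib_left sum_distrib_right distrib_left sum.distrib mult_ac)
qed

lemma incA_column_sum:
  assumes "e < n^2"
  shows "(\<Sum>r<2*n. incA n r e) = 2"
proof -
  have "e div n < n" using assms by (simp add: power2_eq_square less_mult_imp_div_less)
  moreover have "e mod n < n" using assms by (cases "n = 0") simp_all
  ultimately have "incA n r e = (if r = e div n then 1 else 0) + (if r = n + e mod n then 1 else 0)" for r
    by (auto simp: incA_def)
  with \<open>e div n < n\<close> \<open>e mod n < n\<close> show ?thesis by (simp add: sum.distrib)
qed

lemma Eblk_column_sum:
  assumes "j < n"
  shows "(\<Sum>r<2*n. Eblk n r j) = -1"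
proof -
  have "Eblk n r j = (if r = j then -1 else 0)" for r using assms by (auto simp: Eblk_def)
  with assms show ?thesis by simp
qed

(* The factors 10 = 5 * 2 and 5 m of the regularizer come from the column sums of A (two ones)
   and of -E (a single one, repeated in the m blocks). *)
lemma reg_eq_incidence_sum:
  "reg n m d (x, p, y) = 2 * dinf n d / real m *
     incidence_sum n m (\<lambda>i e r. edge_reg (x i e) (y i r)) (\<lambda>i j r. - edge_reg (p j) (y i r))"
proof -
  have x_part: "(\<Sum>r<2*n. incA n r e * edge_reg (x i e) (y i r))
      = 10 * xlogx (x i e) + x i e * (\<Sum>r<2*n. incA n r e * (y i r)^2)" if "e < n^2" for i e
  proof -
    have "(\<Sum>r<2*n. incA n r e * edge_reg (x i e) (y i r))
        = 5 * xlogx (x i e) * (\<Sum>r<2*n. incA n r e) + x i e * (\<Sum>r<2*n. incA n r e * (y i r)^2)"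
      by (simp add: edge_reg_def sum.distrib sum_distrib_left sum_distrib_right algebra_simps)
    then show ?thesis using incA_column_sum[OF that] by simp
  qed
  have p_part: "(\<Sum>r<2*n. Eblk n r j * - edge_reg (p j) (y i r))
      = 5 * xlogx (p j) - p j * (\<Sum>r<2*n. Eblk n r j * (y i r)^2)" if "j < n" for i j
  proof -
    have "(\<Sum>r<2*n. Eblk n r j * - edge_reg (p j) (y i r))
        = - 5 * xlogx (p j) * (\<Sum>r<2*n. Eblk n r j) - p j * (\<Sum>r<2*n. Eblk n r j * (y i r)^2)"
      by (simp add: edge_reg_def sum_subtractf sum_negf sum_distrib_left sum_distrib_right algebra_simps)
    then show ?thesis using Eblk_column_sum[OF that] by simp
  qed
  have "(\<Sum>i<m. \<Sum>e<n^2. \<Sum>r<2*n. incA n r e * edge_reg (x i e) (y i r))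
      = (\<Sum>i<m. \<Sum>e<n^2. 10 * xlogx (x i e) + x i e * (\<Sum>r<2*n. incA n r e * (y i r)^2))"
    by (intro sum.cong refl) (simp only: x_part lessThan_iff)
  also have "\<dots> = 10 * (\<Sum>i<m. \<Sum>e<n^2. xlogx (x i e))
      + (\<Sum>i<m. \<Sum>e<n^2. x i e * (\<Sum>r<2*n. incA n r e * (y i r)^2))"
    by (simp add: sum.distrib sum_distrib_left)
  finally have x_sum: "(\<Sum>i<m. \<Sum>e<n^2. \<Sum>r<2*n. incA n r e * edge_reg (x i e) (y i r)) = \<dots>" .
  have "(\<Sum>i<m. \<Sum>j<n. \<Sum>r<2*n. Eblk n r j * - edge_reg (p j) (y i r))
      = (\<Sum>i<m. \<Sum>j<n. 5 * xlogx (p j) - p j * (\<Sum>r<2*n. Eblk n r j * (y i r)^2))"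
    by (intro sum.cong refl) (simp only: p_part lessThan_iff)
  also have "\<dots> = (\<Sum>j<n. \<Sum>i<m. 5 * xlogx (p j) - p j * (\<Sum>r<2*n. Eblk n r j * (y i r)^2))"
    by (rule sum.swap)
  also have "\<dots> = 5 * real m * (\<Sum>j<n. xlogx (p j))
      - (\<Sum>j<n. p j * (\<Sum>i<m. \<Sum>r<2*n. Eblk n r j * (y i r)^2))"
    by (simp add: sum_subtractf sum_distrib_left sum.distrib algebra_simps)
  finally have p_sum: "(\<Sum>i<m. \<Sum>j<n. \<Sum>r<2*n. Eblk n r j * - edge_reg (p j) (y i r)) = \<dots>" .
  show ?thesis
    unfolding reg_def incidence_sum_def prod.case x_sum p_sum by (simp add: algebra_simps)
qed

lemma Gop_diff_eq:
  "pt_diff (Gop n m d q (xa, pa, ya)) (Gop n m d q (xb, pb, yb)) =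
     (\<lambda>i e. 2 * dinf n d / real m * ATy_x n (\<lambda>i r. ya i r - yb i r) i e,
      \<lambda>j. 2 * dinf n d / real m * ATy_p n m (\<lambda>i r. ya i r - yb i r) j,
      \<lambda>i r. - (2 * dinf n d / real m) * Ax n m (\<lambda>i e. xa i e - xb i e, \<lambda>j. pa j - pb j, y) i r)"
  by (simp add: pt_diff_def Gop_def ATy_x_def ATy_p_def Ax_def fun_eq_iff sum_subtractf
      right_diff_distrib add_divide_distrib diff_divide_distrib) (simp add: divide_simps algebra_simps)

lemma ip_Gop_diff_eq:
  "ip n m (pt_diff (Gop n m d q (xa, pa, ya)) (Gop n m d q (xb, pb, yb))) (pt_diff (xb, pb, yb) (xc, pc, yc))
     = 2 * dinf n d / real m * incidence_sum n m
         (\<lambda>i e r. (ya i r - yb i r) * (xb i e - xc i e) - (yb i r - yc i r) * (xa i e - xb i e))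
         (\<lambda>i j r. (ya i r - yb i r) * (pb j - pc j) - (yb i r - yc i r) * (pa j - pb j))"
  unfolding incidence_sum_diff
    incidence_sum_ATy[of n m "\<lambda>i r. ya i r - yb i r" "\<lambda>i e. xb i e - xc i e" "\<lambda>j. pb j - pc j"]
    incidence_sum_Ax[of n m "\<lambda>i r. yb i r - yc i r" "\<lambda>i e. xa i e - xb i e" "\<lambda>j. pa j - pb j" ya]
  unfolding Gop_diff_eq[where y = ya]
  unfolding ip_def pt_diff_def prod.case
  by (simp add: sum_distrib_left sum_negf right_diff_distrib distrib_left mult_ac)

lemma reg_defect3_eq:
  "3 * (reg n m d (xa, pa, ya) + reg n m d (xb, pb, yb) + reg n m d (xc, pc, yc)
        - 3 * reg n m d (pt_avg3 (xa, pa, ya) (xb, pb, yb) (xc, pc, yc)))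
   = 2 * dinf n d / real m * incidence_sum n m
      (\<lambda>i e r. 3 * (edge_reg (xa i e) (ya i r) + edge_reg (xb i e) (yb i r) + edge_reg (xc i e) (yc i r)
         - 3 * edge_reg ((xa i e + xb i e + xc i e) / 3) ((ya i r + yb i r + yc i r) / 3)))
      (\<lambda>i j r. - (3 * (edge_reg (pa j) (ya i r) + edge_reg (pb j) (yb i r) + edge_reg (pc j) (yc i r)
         - 3 * edge_reg ((pa j + pb j + pc j) / 3) ((ya i r + yb i r + yc i r) / 3))))"
  unfolding pt_avg3_def prod.case reg_eq_incidence_sum incidence_sum_def
  by (simp add: sum.distrib sum_subtractf sum_negf sum_distrib_left algebra_simps)

lemma dinf_nonneg:
  assumes "1 \<le> n"
  shows "0 \<le> dinf n d"
proof -
  have "\<bar>d 0\<bar> \<le> dinf n d"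
    unfolding dinf_def using assms by (intro Max_ge) auto
  then show ?thesis by linarith
qed

theorem theorem2:
  fixes n m :: nat and d :: "nat \<Rightarrow> real" and q :: "nat \<Rightarrow> nat \<Rightarrow> real"
    and a b c :: pt
  assumes "1 \<le> n" and "1 \<le> m"
    and "\<forall>i<m. simplex n (q i)"
    and "\<forall>e<n^2. 0 \<le> d e"
    and "inZ n m a" and "inZ n m b" and "inZ n m c"
  shows "3 * (reg n m d a + reg n m d b + reg n m d c - 3 * reg n m d (pt_avg3 a b c))
           \<ge> ip n m (pt_diff (Gop n m d q a) (Gop n m d q b)) (pt_diff b c)"
proof -
  obtain xa pa ya xb pb yb xc pc yc where
    abc: "a = (xa, pa, ya)" "b = (xb, pb, yb)" "c = (xc, pc, yc)"
    by (metis prod.exhaust)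
  have x: "0 \<le> xa i e" "0 \<le> xb i e" "0 \<le> xc i e" if "i < m" "e < n^2" for i e
    using assms(5-7) that unfolding abc inZ_def simplex_def by auto
  have p: "0 \<le> pa j" "0 \<le> pb j" "0 \<le> pc j" if "j < n" for j
    using assms(5-7) that unfolding abc inZ_def simplex_def by auto
  have y: "\<bar>ya i r\<bar> \<le> 1" "\<bar>yb i r\<bar> \<le> 1" "\<bar>yc i r\<bar> \<le> 1" if "i < m" "r < 2 * n" for i r
    using assms(5-7) that unfolding abc inZ_def by (auto simp: abs_le_iff)
  note x_edge = edge_reg_area_convex[OF x y] and p_edge = edge_reg_area_convex[OF p y]
  show ?thesis
    unfolding abc ip_Gop_diff_eq reg_defect3_eq
    apply (intro mult_left_mono incidence_sum_mono)
    subgoal for i e r using x_edge[of i e i e i e i r i r i r] by (simp add: abs_le_iff)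
    subgoal for i j r using p_edge[of j j j i r i r i r] by (simp add: abs_le_iff)
    using dinf_nonneg[OF assms(1)] by simp
qed

end
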